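(* Let $d\in\mathbb{N}$, $R,C>0$, $\kappa\ge1>\overline\lambda>\underline\lambda>0$ and $\alpha\in(0,1)$. Then there exist $\xi_0\in(0,R)$ and $\gamma,\theta>1$ such that for every $\xi\in(0,\xi_0]$, every $n\in\mathbb{N}$ and every sequence $\{h_j\}_{j=1}^n$ satisfying (H0)–(H3) below, $$B_{r/\theta}\subseteq h^n(B_\xi)\subseteq B_{\theta r},\qquad r=\xi\,|\det D_0h^n|^{1/d},$$ and moreover for every $x\in\mathbb{R}^d$ with $|x|\le\xi$, $$|h^n(x)-D_0h^n(x)|<\gamma\,|\det D_0h^n|^{1/d}\,|x|^{1+\alpha}.$$ Hypotheses, for each $j=1,\dots,n$: (H0) $h_j:B_R\to h_j(B_R)$ is a $\mathcal{C}^{1+\alpha}$ diffeomorphism with $h_j(0)=0$; (H1) $\|h_j\|_{\mathcal{C}^{1+\alpha}}<C$; (H2) for all $y\in B_R$, $\underline\lambda<m(D_yh_j)\le\|D_yh_j\|<\overline\lambda$; (H3) $D_0h^j$ is $\kappa$-conformal.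
   Context: $B_r$ denotes the open Euclidean ball of radius $r$ about $0$ in $\mathbb{R}^d$; $h^j=h_j\circ\cdots\circ h_1$. $m(D)=\inf_{|v|=1}|Dv|$; a matrix $D$ is $\kappa$-conformal if $\|D\|\,\|D^{-1}\|\le\kappa$. $\|h\|_{\mathcal{C}^{1+\alpha}}=\|h\|_{\mathcal{C}^1}+\sup\{\|D_xh-D_yh\|/|x-y|^\alpha: 0<|x-y|<1\}$. *)

theory Defs
  imports "HOL-Analysis.Analysis"
begin

fun hcomp :: "(nat \<Rightarrow> 'a \<Rightarrow> 'a) \<Rightarrow> nat \<Rightarrow> 'a \<Rightarrow> 'a" where
  "hcomp h 0 = id"
| "hcomp h (Suc j) = h (Suc j) \<circ> hcomp h j"

abbreviation Df :: "('a::real_normed_vector \<Rightarrow> 'b::real_normed_vector) \<Rightarrow> 'a \<Rightarrow> 'a \<Rightarrow> 'b" where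
  "Df f x \<equiv> frechet_derivative f (at x)"

definition conorm :: "('a::real_normed_vector \<Rightarrow> 'b::real_normed_vector) \<Rightarrow> real" where
  "conorm L = Inf {norm (L v) | v. norm v = 1}"

definition kappa_conformal :: "real \<Rightarrow> ('a::real_normed_vector \<Rightarrow> 'a) \<Rightarrow> bool" where
  "kappa_conformal \<kappa> L \<longleftrightarrow> linear L \<and> bij L \<and> onorm L * onorm (inv L) \<le> \<kappa>"

definition C1alpha_on :: "'a::real_normed_vector set \<Rightarrow> real \<Rightarrow> ('a \<Rightarrow> 'b::real_normed_vector) \<Rightarrow> bool" where
  "C1alpha_on S \<alpha> f \<longleftrightarrow>
     (\<forall>x\<in>S. f differentiable (at x)) \<and>
     (\<forall>x\<in>S. \<exists>e>0. \<exists>K. \<forall>y\<in>S \<inter> ball x e. \<forall>z\<in>S \<inter> ball x e.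
        onorm (\<lambda>v. Df f y v - Df f z v) \<le> K * dist y z powr \<alpha>)"

definition C1alpha_diffeo :: "'a::real_normed_vector set \<Rightarrow> real \<Rightarrow> ('a \<Rightarrow> 'a) \<Rightarrow> bool" where
  "C1alpha_diffeo S \<alpha> f \<longleftrightarrow>
     C1alpha_on S \<alpha> f \<and> inj_on f S \<and> open (f ` S) \<and>
     (\<exists>g. (\<forall>x\<in>S. g (f x) = x) \<and> g ` (f ` S) \<subseteq> S \<and> C1alpha_on (f ` S) \<alpha> g)"

text \<open>The C^{1+alpha} norm on S (extended-real valued, so that an unbounded quantity is +infinity):
  sup |f| + sup ||Df|| + sup { ||D_x f - D_y f|| / |x-y|^alpha : x,y in S, 0 < |x-y| < 1 }.\<close>
definition C1alpha_norm :: "'a::real_normed_vector set \<Rightarrow> real \<Rightarrow> ('a \<Rightarrow> 'b::real_normed_vector) \<Rightarrow> ereal" where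
  "C1alpha_norm S \<alpha> f =
     (SUP x\<in>S. ereal (norm (f x))) + (SUP x\<in>S. ereal (onorm (Df f x))) +
     (SUP p\<in>{(x, y). x \<in> S \<and> y \<in> S \<and> 0 < dist x y \<and> dist x y < 1}.
        ereal (onorm (\<lambda>v. Df f (fst p) v - Df f (snd p) v) / dist (fst p) (snd p) powr \<alpha>))"

end

theory Submission
  imports Defs
begin

text \<open>Write L_j = D_0 h^j. Near the origin one shows by induction on j that
  h^j(x) = L_j(x + w_j) with |w_j| <= G |x|^(1+alpha) (1 + q + ... + q^(j-1)), q = lup^alpha:
  the Taylor error of h_(j+1) at h^j(x) has size C (|L_j| |x|)^(1+alpha), and pulling it back
  by L_(j+1)^-1, of norm at most kappa / |L_(j+1)| <= kappa / (llo |L_j|) by conformality,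
  leaves the factor |L_j|^alpha <= q^j. So h^n is L_n up to a relative error O(|x|^alpha).
  For a kappa-conformal L, both |L| and 1/|L^-1| lie within a factor kappa of |det L|^(1/d)
  (because |det L| <= |L|^d), which gives the outer inclusion and the remainder estimate; the
  inner inclusion follows from Brouwer's fixed point theorem.\<close>

section \<open>Determinant and operator norm\<close>

lemma abs_det_le_fact_mult_power:
  fixes A :: "real^'n^'n"
  assumes entries: "\<And>i j. \<bar>A $ i $ j\<bar> \<le> c"
  shows "\<bar>det A\<bar> \<le> fact CARD('n) * c ^ CARD('n)"
proof -
  have summand: "\<bar>of_int (sign p) * (\<Prod>i\<in>UNIV. A $ i $ p i)\<bar> \<le> c ^ CARD('n)" for p
  proof -
    have "\<bar>\<Prod>i\<in>UNIV. A $ i $ p i\<bar> \<le> (\<Prod>i\<in>(UNIV::'n set). c)"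
      unfolding abs_prod by (rule prod_mono) (use entries in auto)
    then show ?thesis by (simp add: abs_mult sign_def)
  qed
  have "\<bar>det A\<bar> \<le> (\<Sum>p\<in>{p. p permutes UNIV}. \<bar>of_int (sign p) * (\<Prod>i\<in>UNIV. A $ i $ p i)\<bar>)"
    unfolding det_def by (rule sum_abs)
  also have "\<dots> \<le> (\<Sum>p\<in>{p. p permutes (UNIV::'n set)}. c ^ CARD('n))"
    by (rule sum_mono) (rule summand)
  also have "\<dots> = fact CARD('n) * c ^ CARD('n)"
    by (simp add: card_permutations)
  finally show ?thesis .
qed

lemma abs_det_matrix_le_fact_mult_power:
  fixes f :: "real^'n \<Rightarrow> real^'n"
  assumes "linear f"
  shows "\<bar>det (matrix f)\<bar> \<le> fact CARD('n) * onorm f ^ CARD('n)"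
proof (rule abs_det_le_fact_mult_power)
  fix i j
  have "\<bar>matrix f $ i $ j\<bar> \<le> norm (f (axis j 1))"
    unfolding matrix_def by (simp add: component_le_norm_cart)
  also have "\<dots> \<le> onorm f * norm (axis j (1::real))"
    using assms by (intro onorm) (simp add: linear_conv_bounded_linear)
  finally show "\<bar>matrix f $ i $ j\<bar> \<le> onorm f" by simp
qed

lemma le_one_if_powers_bounded:
  fixes a c :: real
  assumes "\<And>k. a ^ k \<le> c"
  shows "a \<le> 1"
  using real_arch_pow[of a c] assms by (meson not_le)

lemma linear_funpow_det_onorm:
  fixes f :: "real^'n \<Rightarrow> real^'n"
  assumes lin: "linear f"
  shows "linear (f ^^ k) \<and> det (matrix (f ^^ k)) = det (matrix f) ^ k \<and> onorm (f ^^ k) \<le> onorm f ^ k"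
proof (induction k)
  case 0
  have "matrix (id :: real^'n \<Rightarrow> real^'n) = mat 1"
    by (rule matrix_id_mat_1)
  then show ?case
    using linear_id by (simp add: id_def onorm_id_le det_I)
next
  case (Suc k)
  then have lin_k: "linear (f ^^ k)" by blast
  have bl: "bounded_linear f" "bounded_linear (f ^^ k)"
    using lin lin_k by (simp_all add: linear_conv_bounded_linear)
  have "onorm (f \<circ> f ^^ k) \<le> onorm f * onorm (f ^^ k)"
    by (rule onorm_compose[OF bl])
  also have "\<dots> \<le> onorm f * onorm f ^ k"
    using Suc onorm_pos_le[OF bl(1)] by (simp add: mult_left_mono)
  finally have "onorm (f \<circ> f ^^ k) \<le> onorm f ^ Suc k" by simp
  moreover have "det (matrix (f \<circ> f ^^ k)) = det (matrix f) ^ Suc k"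
    using Suc by (simp add: matrix_compose[OF lin_k lin] det_mul)
  moreover have "linear (f \<circ> f ^^ k)"
    using lin lin_k by (rule linear_compose[rotated])
  ultimately show ?case by (simp only: funpow.simps(2))
qed

text \<open>The crude bound with the factor fact n, applied to f^k and combined with
  det (f^k) = (det f)^k and onorm (f^k) <= (onorm f)^k, leaves a bound independent of k
  on the k-th power of the ratio, which forces the ratio to be at most 1.\<close>
lemma abs_det_matrix_le_onorm_power:
  fixes f :: "real^'n \<Rightarrow> real^'n"
  assumes lin: "linear f"
  shows "\<bar>det (matrix f)\<bar> \<le> onorm f ^ CARD('n)"
proof (cases "onorm f = 0")
  case True
  then have "f = (\<lambda>x. 0)"
    using lin by (simp add: linear_conv_bounded_linear onorm_eq_0 fun_eq_iff)
  then have "\<not> inj f"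
    by (metis zero_neq_one norm_axis_1 norm_zero injD)
  then have "det (matrix f) = 0"
    using det_nz_iff_inj[OF lin] by blast
  then show ?thesis by (simp add: True)
next
  case False
  note iter = linear_funpow_det_onorm[OF lin]
  have pos: "0 < onorm f ^ CARD('n)"
    using False onorm_pos_le[of f] lin by (simp add: linear_conv_bounded_linear)
  have "(\<bar>det (matrix f)\<bar> / onorm f ^ CARD('n)) ^ k \<le> fact CARD('n)" for k
  proof -
    have "\<bar>det (matrix f)\<bar> ^ k = \<bar>det (matrix (f ^^ k))\<bar>"
      using iter by (simp add: power_abs)
    also have "\<dots> \<le> fact CARD('n) * onorm (f ^^ k) ^ CARD('n)"
      using iter by (intro abs_det_matrix_le_fact_mult_power) blast
    also have "\<dots> \<le> fact CARD('n) * (onorm f ^ k) ^ CARD('n)"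
      using iter[of k] onorm_pos_le[of "f ^^ k"]
      by (intro mult_left_mono power_mono) (auto simp: linear_conv_bounded_linear)
    also have "\<dots> = fact CARD('n) * (onorm f ^ CARD('n)) ^ k"
      by (simp flip: power_mult add: mult.commute)
    finally show ?thesis
      using pos by (simp add: power_divide divide_le_eq)
  qed
  then have "\<bar>det (matrix f)\<bar> / onorm f ^ CARD('n) \<le> 1"
    by (rule le_one_if_powers_bounded)
  then show ?thesis using pos by (simp add: divide_le_eq)
qed

lemma det_root_bounds:
  fixes L :: "real^'n \<Rightarrow> real^'n"
  assumes lin: "linear L" and bij: "bij L"
  defines "D \<equiv> \<bar>det (matrix L)\<bar> powr (1 / real CARD('n))"
  shows "0 < D" and "D \<le> onorm L" and "1 \<le> D * onorm (inv L)"
proof -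
  have det_nz: "det (matrix L) \<noteq> 0"
    using det_nz_iff_inj[OF lin] bij bij_is_inj by blast
  have D_power: "D ^ CARD('n) = \<bar>det (matrix L)\<bar>"
    unfolding D_def using det_nz by (simp add: powr_realpow[symmetric] powr_powr)
  show D_pos: "0 < D"
    unfolding D_def using det_nz by simp
  have bl: "bounded_linear L"
    using lin by (simp add: linear_conv_bounded_linear)
  have "D ^ CARD('n) \<le> onorm L ^ CARD('n)"
    using D_power abs_det_matrix_le_onorm_power[OF lin] by simp
  then show "D \<le> onorm L"
    using D_pos onorm_pos_le[OF bl] by simp
  have bl_inv: "bounded_linear (inv L)"
    using inj_linear_imp_inv_bounded_linear[OF bl] bij bij_is_inj by blast
  have lin_inv: "linear (inv L)"
    using bl_inv by (simp add: linear_conv_bounded_linear)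
  have "L \<circ> inv L = id"
    using bij by (meson bij_is_surj surj_iff)
  then have "matrix L ** matrix (inv L) = mat 1"
    using matrix_compose[OF lin_inv lin] by (simp add: matrix_id_mat_1)
  then have "1 = \<bar>det (matrix L)\<bar> * \<bar>det (matrix (inv L))\<bar>"
    by (metis abs_mult abs_one det_I det_mul)
  also have "\<dots> \<le> D ^ CARD('n) * onorm (inv L) ^ CARD('n)"
    using D_power abs_det_matrix_le_onorm_power[OF lin_inv] by (simp add: mult_left_mono)
  finally have "1 ^ CARD('n) \<le> (D * onorm (inv L)) ^ CARD('n)"
    by (simp add: power_mult_distrib)
  then show "1 \<le> D * onorm (inv L)"
    using D_pos onorm_pos_le[OF bl_inv] by (subst (asm) power_mono_iff) auto
qed

lemma kappa_conformal_id:
  "1 \<le> \<kappa> \<Longrightarrow> kappa_conformal \<kappa> (id :: 'a::{real_normed_vector, perfect_space} \<Rightarrow> 'a)"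
  by (simp add: kappa_conformal_def inv_id linear_id onorm_id[unfolded id_def[symmetric]])

lemma kappa_conformal_onorm_bounds:
  fixes L :: "real^'n \<Rightarrow> real^'n"
  assumes conf: "kappa_conformal \<kappa> L"
  defines "D \<equiv> \<bar>det (matrix L)\<bar> powr (1 / real CARD('n))"
  shows "0 < D" and "onorm L \<le> \<kappa> * D" and "onorm (inv L) \<le> \<kappa> / D"
proof -
  have lin: "linear L" and bij: "bij L" and prod: "onorm L * onorm (inv L) \<le> \<kappa>"
    using conf by (auto simp: kappa_conformal_def)
  note bounds = det_root_bounds[OF lin bij, folded D_def]
  show "0 < D" by (rule bounds(1))
  have "0 < D * onorm (inv L)"
    using bounds(3) by linarith
  then have inv_pos: "0 < onorm (inv L)"
    using bounds(1) by (simp add: zero_less_mult_iff)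
  have "0 \<le> \<kappa>"
    using prod inv_pos onorm_pos_le[of L] lin
    by (meson linear_conv_bounded_linear mult_nonneg_nonneg order_trans less_imp_le)
  then have "onorm L * onorm (inv L) \<le> (\<kappa> * D) * onorm (inv L)"
    using prod mult_left_mono[OF bounds(3), of \<kappa>] by (simp add: mult.assoc)
  then show "onorm L \<le> \<kappa> * D"
    using inv_pos by simp
  have "D * onorm (inv L) \<le> \<kappa>"
    using prod mult_right_mono[OF bounds(2), of "onorm (inv L)"] inv_pos by linarith
  then show "onorm (inv L) \<le> \<kappa> / D"
    using bounds(1) by (simp add: field_simps)
qed

section \<open>Estimates for a single map\<close>

lemma conorm_mult_norm_le:
  fixes L :: "'a::real_normed_vector \<Rightarrow> 'b::real_normed_vector"
  assumes "linear L"
  shows "conorm L * norm v \<le> norm (L v)"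
proof (cases "v = 0")
  case True
  then show ?thesis using assms by (simp add: linear_0)
next
  case False
  have "conorm L \<le> norm (L (v /\<^sub>R norm v))"
    unfolding conorm_def using False by (intro cInf_lower) (auto intro!: bdd_belowI[where m=0])
  also have "\<dots> = norm (L v) / norm v"
    using assms by (simp add: linear_scale divide_inverse_commute)
  finally show ?thesis
    using False by (simp add: field_simps)
qed

lemma C1alpha_norm_Hoelder_bound:
  fixes f :: "'a::real_normed_vector \<Rightarrow> 'b::real_normed_vector"
  assumes norm_f: "C1alpha_norm S \<alpha> f < ereal C"
    and diff: "\<And>x. x \<in> S \<Longrightarrow> f differentiable (at x)"
    and yz: "y \<in> S" "z \<in> S" "0 < dist y z" "dist y z < 1"
  shows "onorm (\<lambda>v. Df f y v - Df f z v) \<le> C * dist y z powr \<alpha>"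
proof -
  let ?sup = "(SUP x\<in>S. ereal (norm (f x)))"
  let ?sup_Df = "(SUP x\<in>S. ereal (onorm (Df f x)))"
  let ?Hoelder = "(SUP p\<in>{(x, y). x \<in> S \<and> y \<in> S \<and> 0 < dist x y \<and> dist x y < 1}.
        ereal (onorm (\<lambda>v. Df f (fst p) v - Df f (snd p) v) / dist (fst p) (snd p) powr \<alpha>))"
  have "0 \<le> ?sup"
    using yz by (intro SUP_upper2[where i=y]) auto
  moreover have "0 \<le> ?sup_Df"
    using yz diff by (intro SUP_upper2[where i=y])
      (auto intro!: onorm_pos_le has_derivative_bounded_linear frechet_derivative_works[THEN iffD1])
  ultimately have "?Hoelder \<le> C1alpha_norm S \<alpha> f"
    unfolding C1alpha_norm_def by (simp add: add_increasing)
  moreover have "ereal (onorm (\<lambda>v. Df f y v - Df f z v) / dist y z powr \<alpha>) \<le> ?Hoelder"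
    using yz by (intro SUP_upper2[where i="(y, z)"]) auto
  ultimately have "ereal (onorm (\<lambda>v. Df f y v - Df f z v) / dist y z powr \<alpha>) < ereal C"
    using norm_f by (meson order_trans le_less_trans)
  then show ?thesis
    using yz by (simp add: pos_divide_less_eq)
qed

lemma norm_remainder_le_Hoelder:
  fixes f :: "'a::real_normed_vector \<Rightarrow> 'b::real_normed_vector"
  assumes diff: "\<And>y. y \<in> cball 0 r \<Longrightarrow> f differentiable (at y)"
    and Hoelder: "\<And>y. y \<in> cball 0 r \<Longrightarrow> onorm (\<lambda>v. Df f y v - Df f 0 v) \<le> K * norm y powr \<alpha>"
    and K: "0 \<le> K" and \<alpha>: "0 < \<alpha>" and z: "norm z \<le> r"
  shows "norm (f z - f 0 - Df f 0 z) \<le> K * norm z powr (1 + \<alpha>)"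
proof -
  let ?S = "cball (0::'a) (norm z)"
  have S_sub: "?S \<subseteq> cball 0 r"
    using z by auto
  have "0 \<le> r"
    using z norm_ge_zero order_trans by blast
  then have "f differentiable (at 0)"
    using diff[of 0] by simp
  then have bl: "bounded_linear (Df f 0)"
    by (simp add: frechet_derivative_works has_derivative_bounded_linear)
  have der: "((\<lambda>y. f y - Df f 0 y) has_derivative (\<lambda>v. Df f y v - Df f 0 v)) (at y within ?S)"
    if "y \<in> ?S" for y
  proof -
    have "(f has_derivative Df f y) (at y)"
      using diff[of y] that S_sub frechet_derivative_works by blast
    then have "((\<lambda>y. f y - Df f 0 y) has_derivative (\<lambda>v. Df f y v - Df f 0 v)) (at y)"
      by (rule has_derivative_diff) (rule bounded_linear_imp_has_derivative[OF bl])
    then show ?thesis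
      by (rule has_derivative_at_withinI)
  qed
  have bound: "onorm (\<lambda>v. Df f y v - Df f 0 v) \<le> K * norm z powr \<alpha>" if "y \<in> ?S" for y
  proof -
    have "onorm (\<lambda>v. Df f y v - Df f 0 v) \<le> K * norm y powr \<alpha>"
      using Hoelder that S_sub by blast
    also have "\<dots> \<le> K * norm z powr \<alpha>"
      using that K \<alpha> by (intro mult_left_mono powr_mono2) auto
    finally show ?thesis .
  qed
  have "norm ((f z - Df f 0 z) - (f 0 - Df f 0 0)) \<le> K * norm z powr \<alpha> * norm (z - 0)"
    by (rule differentiable_bound[OF convex_cball der bound]) auto
  also have "\<dots> = K * norm z powr (1 + \<alpha>)"
    by (cases "z = 0") (simp_all add: powr_add)
  finally show ?thesis
    using bl by (simp add: linear_simps algebra_simps)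
qed

lemma perturbed_linear_image_covers:
  fixes g L :: "'a::euclidean_space \<Rightarrow> 'a"
  assumes L: "bounded_linear L" "bij L" and g: "continuous_on (cball 0 \<rho>) g"
    and close: "\<And>x. x \<in> cball 0 \<rho> \<Longrightarrow> norm (inv L (g x) - x) \<le> \<rho> / 2"
    and y: "norm (inv L y) \<le> \<rho> / 2"
  shows "y \<in> g ` cball 0 \<rho>"
proof -
  define F where "F x = x - inv L (g x) + inv L y" for x
  \<comment> \<open>the fixed points of F are exactly the preimages of y under g\<close>
  have bl_inv: "bounded_linear (inv L)"
    using inj_linear_imp_inv_bounded_linear[OF L(1)] L(2) bij_is_inj by blast
  have "F x \<in> cball 0 \<rho>" if "x \<in> cball 0 \<rho>" for x
    using close[OF that] y norm_triangle_ineq[of "x - inv L (g x)" "inv L y"]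
    by (simp add: F_def norm_minus_commute)
  moreover have "continuous_on (cball 0 \<rho>) F"
    unfolding F_def
    by (intro continuous_intros continuous_on_compose2[OF linear_continuous_on[OF bl_inv] g]) auto
  moreover have "0 \<le> \<rho>"
    using y norm_ge_zero[of "inv L y"] by linarith
  ultimately obtain x where x: "x \<in> cball 0 \<rho>" "F x = x"
    using brouwer[OF compact_cball convex_cball, of 0 \<rho> F] by (metis Pi_I cball_eq_empty not_less)
  then have "inv L (g x) = inv L y"
    by (simp add: F_def)
  then have "g x = y"
    using L(2) by (metis bij_is_surj surj_f_inv_f)
  then show ?thesis
    using x(1) by blast
qed

section \<open>Iterated compositions\<close>

locale contraction_constants =
  fixes R C \<kappa> lup llo \<alpha> :: real
  assumes R_pos: "0 < R" and C_nonneg: "0 \<le> C" and kappa_ge_1: "1 \<le> \<kappa>"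
    and llo_pos: "0 < llo" and llo_less_lup: "llo < lup" and lup_less_1: "lup < 1"
    and alpha_pos: "0 < \<alpha>"
begin

text \<open>q^j dominates onorm (L_j) powr alpha, the damping factor of the j-th Taylor error, and G
  collects the constants of a single pull-back step. A radius r is admissible if the accumulated
  perturbation stays below r/2, so that the iterates of B_r remain inside B_R and B_1.\<close>

definition q :: real where "q = lup powr \<alpha>"

definition G :: real where "G = \<kappa> * C * 2 powr (1 + \<alpha>) / llo"

definition admissible :: "real \<Rightarrow> bool" where
  "admissible r \<longleftrightarrow> 0 \<le> r \<and> 2 * r < R \<and> 2 * r < 1 \<and> G * r powr \<alpha> \<le> (1 - q) / 2"

lemma q_pos: "0 < q" and q_less_1: "q < 1"
  using llo_pos llo_less_lup lup_less_1 alpha_pos powr_less_mono2[of \<alpha> lup 1]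
  unfolding q_def by auto

lemma G_nonneg: "0 \<le> G"
  unfolding G_def using kappa_ge_1 C_nonneg llo_pos by simp

lemma admissible_mono: "admissible r \<Longrightarrow> 0 \<le> s \<Longrightarrow> s \<le> r \<Longrightarrow> admissible s"
  unfolding admissible_def using G_nonneg alpha_pos
  by (smt (verit) mult_left_mono powr_mono2)

lemma geometric_error_le:
  assumes "admissible (norm x)"
  shows "G * norm x powr (1 + \<alpha>) * (\<Sum>i<j. q ^ i) \<le> G * norm x powr (1 + \<alpha>) / (1 - q)"
    and "G * norm x powr (1 + \<alpha>) / (1 - q) \<le> norm x / 2"
proof -
  have "(\<Sum>i<j. q ^ i) \<le> 1 / (1 - q)"
    using q_pos q_less_1 by (simp add: sum_gp_strict field_simps)
  then have "G * norm x powr (1 + \<alpha>) * (\<Sum>i<j. q ^ i) \<le> G * norm x powr (1 + \<alpha>) * (1 / (1 - q))"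
    using G_nonneg by (intro mult_left_mono) auto
  then show "G * norm x powr (1 + \<alpha>) * (\<Sum>i<j. q ^ i) \<le> G * norm x powr (1 + \<alpha>) / (1 - q)"
    by simp
  have "G * norm x powr (1 + \<alpha>) / (1 - q) = G * norm x powr \<alpha> / (1 - q) * norm x"
    by (cases "x = 0") (simp_all add: powr_add)
  also have "\<dots> \<le> (1 - q) / 2 / (1 - q) * norm x"
    using assms q_less_1 unfolding admissible_def by (intro mult_right_mono divide_right_mono) auto
  also have "\<dots> = norm x / 2"
    using q_less_1 by (simp add: field_simps)
  finally show "G * norm x powr (1 + \<alpha>) / (1 - q) \<le> norm x / 2" .
qed

lemma ex_admissible: "\<exists>\<xi>0>0. admissible \<xi>0"
proof -
  define \<xi>0 where "\<xi>0 = min (min (R / 4) (1 / 4)) (((1 - q) / (2 * G + 1)) powr (1 / \<alpha>))"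
  have pos: "0 < \<xi>0"
    unfolding \<xi>0_def using R_pos q_less_1 G_nonneg by simp
  have "\<xi>0 powr \<alpha> \<le> (((1 - q) / (2 * G + 1)) powr (1 / \<alpha>)) powr \<alpha>"
    using pos alpha_pos unfolding \<xi>0_def by (intro powr_mono2) auto
  also have "\<dots> = (1 - q) / (2 * G + 1)"
    using alpha_pos q_less_1 G_nonneg by (simp add: powr_powr)
  finally have "G * \<xi>0 powr \<alpha> \<le> G * ((1 - q) / (2 * G + 1))"
    using G_nonneg by (rule mult_left_mono)
  also have "\<dots> \<le> (1 - q) / 2"
    using G_nonneg q_less_1 by (simp add: field_simps)
  finally have "G * \<xi>0 powr \<alpha> \<le> (1 - q) / 2" .
  moreover have "2 * \<xi>0 < R" "2 * \<xi>0 < 1"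
    unfolding \<xi>0_def using R_pos by auto
  ultimately show ?thesis
    using pos unfolding admissible_def by (intro exI[of _ \<xi>0]) auto
qed

end

locale contracting_sequence = contraction_constants +
  fixes h :: "nat \<Rightarrow> 'a::euclidean_space \<Rightarrow> 'a" and n :: nat
  assumes differentiable: "\<And>j y. j \<in> {1..n} \<Longrightarrow> y \<in> ball 0 R \<Longrightarrow> h j differentiable (at y)"
    and Hoelder_at_0: "\<And>j y. j \<in> {1..n} \<Longrightarrow> y \<in> ball 0 R \<Longrightarrow> norm y < 1 \<Longrightarrow>
          onorm (\<lambda>v. Df (h j) y v - Df (h j) 0 v) \<le> C * norm y powr \<alpha>"
    and fixes_0: "\<And>j. j \<in> {1..n} \<Longrightarrow> h j 0 = 0"
    and onorm_Df_0: "\<And>j. j \<in> {1..n} \<Longrightarrow> onorm (Df (h j) 0) \<le> lup"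
    and conorm_Df_0: "\<And>j. j \<in> {1..n} \<Longrightarrow> llo < conorm (Df (h j) 0)"
    and conformal: "\<And>j. j \<in> {1..n} \<Longrightarrow> kappa_conformal \<kappa> (Df (hcomp h j) 0)"
begin

abbreviation L :: "nat \<Rightarrow> 'a \<Rightarrow> 'a" where "L j \<equiv> Df (hcomp h j) 0"

abbreviation A :: "nat \<Rightarrow> 'a \<Rightarrow> 'a" where "A j \<equiv> Df (h j) 0"

lemma has_derivative_h: "j \<in> {1..n} \<Longrightarrow> (h j has_derivative A j) (at 0)"
  using differentiable[of j 0] R_pos frechet_derivative_works by auto

lemma hcomp_0: "j \<le> n \<Longrightarrow> hcomp h j 0 = 0"
  by (induction j) (auto simp: fixes_0)

lemma has_derivative_hcomp: "j \<le> n \<Longrightarrow> (hcomp h j has_derivative L j) (at 0)"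
proof (induction j)
  case 0
  show ?case
    by (simp add: frechet_derivative_works[symmetric])
next
  case (Suc j)
  then have "(h (Suc j) \<circ> hcomp h j has_derivative A (Suc j) \<circ> L j) (at 0)"
    using has_derivative_h[of "Suc j"] hcomp_0[of j] by (intro diff_chain_at) auto
  then show ?case
    by (metis frechet_derivative_at hcomp.simps(2))
qed

lemma L_0: "L 0 = id"
  by (metis frechet_derivative_at has_derivative_id hcomp.simps(1))

lemma L_Suc: "Suc j \<le> n \<Longrightarrow> L (Suc j) = A (Suc j) \<circ> L j"
  using has_derivative_h[of "Suc j"] has_derivative_hcomp[of j] hcomp_0[of j]
  by (metis Suc_leD atLeastAtMost_iff diff_chain_at frechet_derivative_at hcomp.simps(2)
      le_add1 plus_1_eq_Suc)

lemma bounded_linear_L: "j \<le> n \<Longrightarrow> bounded_linear (L j)"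
  using has_derivative_hcomp has_derivative_bounded_linear by blast

lemma kappa_conformal_L: "j \<le> n \<Longrightarrow> kappa_conformal \<kappa> (L j)"
  using conformal[of j] kappa_conformal_id[OF kappa_ge_1] L_0 by (cases "j = 0") auto

lemma onorm_L_le_power: "j \<le> n \<Longrightarrow> onorm (L j) \<le> lup ^ j"
proof (induction j)
  case 0
  show ?case by (simp add: L_0 id_def onorm_id_le)
next
  case (Suc j)
  have "onorm (L (Suc j)) \<le> onorm (A (Suc j)) * onorm (L j)"
    using Suc.prems L_Suc[of j] has_derivative_h[of "Suc j"] bounded_linear_L[of j]
    by (auto intro: onorm_compose dest: has_derivative_bounded_linear)
  also have "\<dots> \<le> lup * lup ^ j"
    using Suc onorm_Df_0[of "Suc j"] llo_pos llo_less_lup bounded_linear_L[of j]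
    by (intro mult_mono) (auto intro: onorm_pos_le)
  finally show ?case by (simp only: power_Suc)
qed

lemma onorm_L_le_1: "j \<le> n \<Longrightarrow> onorm (L j) \<le> 1"
  using onorm_L_le_power[of j] llo_pos llo_less_lup lup_less_1
  by (meson less_imp_le order_trans power_le_one)

lemma onorm_L_le_next: "Suc j \<le> n \<Longrightarrow> llo * onorm (L j) \<le> onorm (L (Suc j))"
proof -
  assume j: "Suc j \<le> n"
  have "llo * norm (L j v) \<le> onorm (L (Suc j)) * norm v" for v
  proof -
    have "llo * norm (L j v) \<le> conorm (A (Suc j)) * norm (L j v)"
      using conorm_Df_0[of "Suc j"] j by (intro mult_right_mono) auto
    also have "\<dots> \<le> norm (A (Suc j) (L j v))"
      using has_derivative_h[of "Suc j"] j
      by (intro conorm_mult_norm_le) (auto dest: has_derivative_linear)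
    also have "\<dots> = norm (L (Suc j) v)"
      by (subst L_Suc[OF j]) simp
    also have "\<dots> \<le> onorm (L (Suc j)) * norm v"
      by (rule onorm[OF bounded_linear_L[OF j]])
    finally show ?thesis .
  qed
  then have "onorm (L j) \<le> onorm (L (Suc j)) / llo"
    using llo_pos by (intro onorm_le) (simp add: field_simps mult.commute)
  then show ?thesis
    using llo_pos by (simp add: field_simps mult.commute)
qed

lemma onorm_L_pos: "j \<le> n \<Longrightarrow> 0 < onorm (L j)"
proof -
  assume j: "j \<le> n"
  obtain v :: 'a where "v \<noteq> 0"
    using nonzero_Basis SOME_Basis by blast
  then have "0 < norm (L j v)"
    using kappa_conformal_L[OF j] bounded_linear_L[OF j]
    by (auto simp: kappa_conformal_def bij_def inj_on_def linear_simps(3)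
        dest: bounded_linear.linear)
  also have "\<dots> \<le> onorm (L j) * norm v"
    by (rule onorm[OF bounded_linear_L[OF j]])
  finally show ?thesis
    using \<open>v \<noteq> 0\<close> by (simp add: zero_less_mult_iff)
qed

lemma onorm_inv_L_le: "j \<le> n \<Longrightarrow> onorm (inv (L j)) \<le> \<kappa> / onorm (L j)"
  using kappa_conformal_L[of j] onorm_L_pos[of j]
  by (simp add: kappa_conformal_def field_simps mult.commute)

lemma remainder_pullback_le:
  assumes j: "Suc j \<le> n" and t: "0 \<le> t"
  shows "onorm (inv (L (Suc j))) * (C * (onorm (L j) * (2 * t)) powr (1 + \<alpha>))
    \<le> G * t powr (1 + \<alpha>) * q ^ j"
proof -
  define N where "N = onorm (L j)"
  define N' where "N' = onorm (L (Suc j))"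
  have N: "0 \<le> N"
    unfolding N_def using j onorm_L_pos[of j] by simp
  have N': "0 < N'"
    unfolding N'_def by (rule onorm_L_pos[OF j])
  have "N powr \<alpha> \<le> (lup ^ j) powr \<alpha>"
    unfolding N_def using j N[unfolded N_def] onorm_L_le_power[of j] alpha_pos
    by (intro powr_mono2) auto
  also have "\<dots> = q ^ j"
    unfolding q_def using llo_pos llo_less_lup by (simp add: powr_power powr_realpow[symmetric] powr_powr mult.commute)
  finally have N_powr: "N powr \<alpha> \<le> q ^ j" .
  have "(N * (2 * t)) powr (1 + \<alpha>) = N * N powr \<alpha> * (2 powr (1 + \<alpha>) * t powr (1 + \<alpha>))"
    using N t by (cases "N = 0") (simp_all add: powr_mult powr_add)
  also have "\<dots> \<le> N' / llo * q ^ j * (2 powr (1 + \<alpha>) * t powr (1 + \<alpha>))"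
    using onorm_L_le_next[OF j] N_powr N N' llo_pos q_pos
    unfolding N_def[symmetric] N'_def[symmetric]
    by (intro mult_right_mono mult_mono) (auto simp: field_simps)
  finally have "onorm (inv (L (Suc j))) * (C * (N * (2 * t)) powr (1 + \<alpha>))
      \<le> \<kappa> / N' * (C * (N' / llo * q ^ j * (2 powr (1 + \<alpha>) * t powr (1 + \<alpha>))))"
    using onorm_inv_L_le[OF j] C_nonneg kappa_ge_1 N'
    by (intro mult_mono mult_left_mono) (auto simp: N'_def)
  also have "\<dots> = G * t powr (1 + \<alpha>) * q ^ j"
    unfolding G_def using N' llo_pos by (simp add: field_simps)
  finally show ?thesis
    unfolding N_def .
qed

lemma norm_L_perturbed_le:
  assumes "j \<le> n" "norm w \<le> norm x / 2"
  shows "norm (L j (x + w)) \<le> onorm (L j) * (2 * norm x)"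
proof -
  have "norm (L j (x + w)) \<le> onorm (L j) * norm (x + w)"
    by (rule onorm[OF bounded_linear_L[OF assms(1)]])
  also have "\<dots> \<le> onorm (L j) * (2 * norm x)"
  proof (rule mult_left_mono)
    show "norm (x + w) \<le> 2 * norm x"
      using assms(2) norm_triangle_ineq[of x w] norm_ge_zero[of x] by linarith
  qed (use onorm_L_pos[OF assms(1)] in simp)
  finally show ?thesis .
qed

lemma norm_h_remainder_le:
  assumes j: "j \<in> {1..n}" and y: "norm y < R" "norm y < 1"
  shows "norm (h j y - A j y) \<le> C * norm y powr (1 + \<alpha>)"
proof -
  have "norm (h j y - h j 0 - A j y) \<le> C * norm y powr (1 + \<alpha>)"
    using y C_nonneg alpha_pos
    by (intro norm_remainder_le_Hoelder[where r = "norm y"])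
      (auto intro: differentiable[OF j] Hoelder_at_0[OF j])
  then show ?thesis
    using fixes_0[OF j] by simp
qed

lemma hcomp_Suc_perturbation:
  assumes x: "admissible (norm x)" and j: "Suc j \<le> n"
    and w: "hcomp h j x = L j (x + w)" "norm w \<le> norm x / 2"
  shows "\<exists>u. hcomp h (Suc j) x = L (Suc j) (x + w + u) \<and> norm u \<le> G * norm x powr (1 + \<alpha>) * q ^ j"
proof -
  define y where "y = hcomp h j x"
  define e where "e = h (Suc j) y - A (Suc j) y"
  define u where "u = inv (L (Suc j)) e"
  have y: "norm y \<le> onorm (L j) * (2 * norm x)"
    unfolding y_def w(1) using j w(2) by (intro norm_L_perturbed_le) auto
  then have "norm y < R" "norm y < 1"
    using x j onorm_L_le_1[of j] onorm_L_pos[of j] mult_left_le_one_le[of "2 * norm x" "onorm (L j)"]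
    unfolding admissible_def by auto
  then have "norm e \<le> C * norm y powr (1 + \<alpha>)"
    unfolding e_def using j by (intro norm_h_remainder_le) auto
  also have "\<dots> \<le> C * (onorm (L j) * (2 * norm x)) powr (1 + \<alpha>)"
    using y C_nonneg alpha_pos by (intro mult_left_mono powr_mono2) auto
  finally have e: "norm e \<le> C * (onorm (L j) * (2 * norm x)) powr (1 + \<alpha>)" .
  have bij: "bij (L (Suc j))"
    using kappa_conformal_L[OF j] by (simp add: kappa_conformal_def)
  have "hcomp h (Suc j) x = A (Suc j) (L j (x + w)) + e"
    unfolding e_def y_def using w(1) by simp
  also have "\<dots> = L (Suc j) (x + w) + L (Suc j) u"
    unfolding u_def using bij by (subst L_Suc[OF j]) (simp add: bij_is_surj surj_f_inv_f)
  also have "\<dots> = L (Suc j) (x + w + u)"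
    using bounded_linear_L[OF j] by (simp add: linear_simps)
  finally have eq: "hcomp h (Suc j) x = L (Suc j) (x + w + u)" .
  have bl_inv: "bounded_linear (inv (L (Suc j)))"
    using inj_linear_imp_inv_bounded_linear[OF bounded_linear_L[OF j]] bij bij_is_inj by blast
  have "norm u \<le> onorm (inv (L (Suc j))) * norm e"
    unfolding u_def by (rule onorm[OF bl_inv])
  also have "\<dots> \<le> onorm (inv (L (Suc j))) * (C * (onorm (L j) * (2 * norm x)) powr (1 + \<alpha>))"
    using e onorm_pos_le[OF bl_inv] by (rule mult_left_mono)
  also have "\<dots> \<le> G * norm x powr (1 + \<alpha>) * q ^ j"
    using j by (rule remainder_pullback_le) simp
  finally show ?thesis
    using eq by blast
qed

lemma hcomp_perturbation_sum:
  assumes x: "admissible (norm x)"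
  shows "j \<le> n \<Longrightarrow> \<exists>w. hcomp h j x = L j (x + w)
    \<and> norm w \<le> G * norm x powr (1 + \<alpha>) * (\<Sum>i<j. q ^ i)"
proof (induction j)
  case 0
  show ?case by (simp add: L_0)
next
  case (Suc j)
  then obtain w where w: "hcomp h j x = L j (x + w)"
    and w_le: "norm w \<le> G * norm x powr (1 + \<alpha>) * (\<Sum>i<j. q ^ i)"
    by auto
  have "norm w \<le> norm x / 2"
    using w_le geometric_error_le(1)[OF x, of j] geometric_error_le(2)[OF x] by linarith
  then obtain u where "hcomp h (Suc j) x = L (Suc j) (x + (w + u))"
    and "norm u \<le> G * norm x powr (1 + \<alpha>) * q ^ j"
    using hcomp_Suc_perturbation[OF x Suc.prems w] by (auto simp: add.assoc)
  moreover have "norm (w + u) \<le> G * norm x powr (1 + \<alpha>) * (\<Sum>i<Suc j. q ^ i)"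
    using norm_triangle_ineq[of w u] w_le calculation(2) by (simp add: algebra_simps)
  ultimately show ?case by blast
qed

lemma hcomp_perturbation:
  assumes "admissible (norm x)" "j \<le> n"
  obtains w where "hcomp h j x = L j (x + w)"
    and "norm w \<le> G * norm x powr (1 + \<alpha>) / (1 - q)" and "norm w \<le> norm x / 2"
  using hcomp_perturbation_sum[OF assms] geometric_error_le[OF assms(1)]
  by (meson order_trans)

lemma norm_hcomp_le:
  assumes "admissible (norm x)" "j \<le> n"
  shows "norm (hcomp h j x) \<le> onorm (L j) * (2 * norm x)"
proof -
  obtain w where "hcomp h j x = L j (x + w)" "norm w \<le> norm x / 2"
    using hcomp_perturbation[OF assms] by blast
  then show ?thesis
    using norm_L_perturbed_le[OF assms(2)] by simp
qed

lemma continuous_on_hcomp: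
  assumes r: "admissible r"
  shows "j \<le> n \<Longrightarrow> continuous_on (cball 0 r) (hcomp h j)"
proof (induction j)
  case 0
  show ?case by (simp add: continuous_on_id)
next
  case (Suc j)
  have cont_h: "continuous_on (ball 0 R) (h (Suc j))"
    using differentiable[of "Suc j"] Suc.prems
    by (intro continuous_at_imp_continuous_on) (auto intro: differentiable_imp_continuous_within)
  have image_sub: "hcomp h j ` cball 0 r \<subseteq> ball 0 R"
  proof
    fix y assume "y \<in> hcomp h j ` cball 0 r"
    then obtain x where x: "norm x \<le> r" and y: "y = hcomp h j x"
      by auto
    have x_adm: "admissible (norm x)"
      using admissible_mono[OF r _ x] by simp
    have "norm y \<le> onorm (L j) * (2 * norm x)"
      unfolding y using x_adm Suc.prems by (intro norm_hcomp_le) auto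
    also have "\<dots> \<le> 2 * norm x"
      using onorm_L_le_1[of j] onorm_L_pos[of j] Suc.prems by (intro mult_left_le_one_le) auto
    finally show "y \<in> ball 0 R"
      using x_adm unfolding admissible_def by simp
  qed
  have "continuous_on (cball 0 r) (hcomp h j)"
    using Suc by simp
  from continuous_on_compose2[OF cont_h this image_sub] show ?case
    by (simp add: o_def)
qed

lemma hcomp_remainder_less:
  assumes x: "admissible (norm x)" "0 < norm x" and D: "0 < D" "onorm (L n) \<le> \<kappa> * D"
  shows "norm (hcomp h n x - L n x) < (\<kappa> * G / (1 - q) + 1) * D * norm x powr (1 + \<alpha>)"
proof -
  obtain w where w: "hcomp h n x = L n (x + w)" "norm w \<le> G * norm x powr (1 + \<alpha>) / (1 - q)"
    using hcomp_perturbation[OF x(1)] by blast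
  have "norm (hcomp h n x - L n x) = norm (L n w)"
    unfolding w(1) using bounded_linear_L[of n] by (simp add: linear_simps)
  also have "\<dots> \<le> onorm (L n) * norm w"
    by (rule onorm[OF bounded_linear_L]) simp
  also have "\<dots> \<le> (\<kappa> * D) * (G * norm x powr (1 + \<alpha>) / (1 - q))"
    using D w(2) onorm_L_pos[of n] by (intro mult_mono) auto
  also have "\<dots> < (\<kappa> * G / (1 - q) + 1) * D * norm x powr (1 + \<alpha>)"
    using D x by (simp add: algebra_simps)
  finally show ?thesis .
qed

lemma hcomp_image_ball_subset:
  assumes \<xi>: "admissible \<xi>" and "0 < D" "onorm (L n) \<le> \<kappa> * D"
  shows "hcomp h n ` ball 0 \<xi> \<subseteq> ball 0 (2 * \<kappa> * (\<xi> * D))"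
proof
  fix y assume "y \<in> hcomp h n ` ball 0 \<xi>"
  then obtain x where x: "norm x < \<xi>" and y: "y = hcomp h n x"
    by auto
  have "norm y \<le> onorm (L n) * (2 * norm x)"
    unfolding y using admissible_mono[OF \<xi>] x by (intro norm_hcomp_le) auto
  also have "\<dots> \<le> (\<kappa> * D) * (2 * norm x)"
    using assms by (intro mult_right_mono) auto
  also have "\<dots> < 2 * \<kappa> * (\<xi> * D)"
    using x assms kappa_ge_1 by simp
  finally show "y \<in> ball 0 (2 * \<kappa> * (\<xi> * D))"
    by simp
qed

lemma ball_subset_hcomp_image:
  assumes \<xi>: "admissible \<xi>" "0 < \<xi>" and D: "0 < D" "onorm (inv (L n)) \<le> \<kappa> / D"
  shows "ball 0 (\<xi> * D / (4 * \<kappa>)) \<subseteq> hcomp h n ` ball 0 \<xi>"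
proof
  fix y :: 'a assume y: "y \<in> ball 0 (\<xi> * D / (4 * \<kappa>))"
  have bij: "bij (L n)"
    using kappa_conformal_L[of n] by (simp add: kappa_conformal_def)
  have bl_inv: "bounded_linear (inv (L n))"
    using inj_linear_imp_inv_bounded_linear[OF bounded_linear_L] bij bij_is_inj by blast
  have "norm (inv (L n) y) \<le> onorm (inv (L n)) * norm y"
    by (rule onorm[OF bl_inv])
  also have "\<dots> \<le> (\<kappa> / D) * (\<xi> * D / (4 * \<kappa>))"
    using y D kappa_ge_1 by (intro mult_mono) auto
  also have "\<dots> = \<xi> / 2 / 2"
    using D kappa_ge_1 by (simp add: field_simps)
  finally have y_pre: "norm (inv (L n) y) \<le> \<xi> / 2 / 2" .
  have "norm (inv (L n) (hcomp h n x) - x) \<le> \<xi> / 2 / 2" if "x \<in> cball 0 (\<xi> / 2)" for x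
  proof -
    have "admissible (norm x)"
      using admissible_mono[OF \<xi>(1), of "norm x"] that \<xi>(2) by simp
    then obtain w where w: "hcomp h n x = L n (x + w)" "norm w \<le> norm x / 2"
      using hcomp_perturbation by blast
    have "inv (L n) (hcomp h n x) - x = w"
      unfolding w(1) using bij by (simp add: bij_is_inj)
    then show ?thesis
      using w(2) that by simp
  qed
  moreover have "continuous_on (cball 0 (\<xi> / 2)) (hcomp h n)"
    using admissible_mono[OF \<xi>(1)] \<xi>(2) by (intro continuous_on_hcomp) auto
  ultimately have "y \<in> hcomp h n ` cball 0 (\<xi> / 2)"
    using perturbed_linear_image_covers[OF bounded_linear_L bij] y_pre by blast
  also have "\<dots> \<subseteq> hcomp h n ` ball 0 \<xi>"
    using \<xi>(2) by (intro image_mono) auto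
  finally show "y \<in> hcomp h n ` ball 0 \<xi>" .
qed

end

lemma (in contraction_constants) contracting_sequenceI:
  fixes h :: "nat \<Rightarrow> 'a::euclidean_space \<Rightarrow> 'a"
  assumes hyp: "\<forall>j\<in>{1..n}.
          C1alpha_diffeo (ball 0 R) \<alpha> (h j) \<and> h j 0 = 0 \<and>
          C1alpha_norm (ball 0 R) \<alpha> (h j) < ereal C \<and>
          (\<forall>y\<in>ball 0 R. llo < conorm (Df (h j) y) \<and> conorm (Df (h j) y) \<le> onorm (Df (h j) y)
                          \<and> onorm (Df (h j) y) < lup) \<and>
          kappa_conformal \<kappa> (Df (hcomp h j) 0)"
  shows "contracting_sequence R C \<kappa> lup llo \<alpha> h n"
proof unfold_locales
  fix j assume j: "j \<in> {1..n}"
  show diff: "h j differentiable (at y)" if "y \<in> ball 0 R" for y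
    using hyp j that unfolding C1alpha_diffeo_def C1alpha_on_def by blast
  show "onorm (\<lambda>v. Df (h j) y v - Df (h j) 0 v) \<le> C * norm y powr \<alpha>"
    if "y \<in> ball 0 R" "norm y < 1" for y
  proof (cases "y = 0")
    case True
    then show ?thesis by (simp add: onorm_zero)
  next
    case False
    then show ?thesis
      using C1alpha_norm_Hoelder_bound[of "ball 0 R" \<alpha> "h j" C y 0] hyp j that R_pos diff
      by (auto simp: dist_norm)
  qed
  have "0 \<in> ball (0::'a) R"
    using R_pos by simp
  then show "onorm (Df (h j) 0) \<le> lup" and "llo < conorm (Df (h j) 0)"
    using hyp j by (auto intro: less_imp_le)
  show "h j 0 = 0" and "kappa_conformal \<kappa> (Df (hcomp h j) 0)"
    using hyp j by auto
qed

lemma (in contraction_constants) hcomp_ball_estimates: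
  fixes h :: "nat \<Rightarrow> real^'d \<Rightarrow> real^'d"
  assumes \<xi>: "admissible \<xi>" "0 < \<xi>"
    and hyp: "\<forall>j\<in>{1..n}.
          C1alpha_diffeo (ball 0 R) \<alpha> (h j) \<and> h j 0 = 0 \<and>
          C1alpha_norm (ball 0 R) \<alpha> (h j) < ereal C \<and>
          (\<forall>y\<in>ball 0 R. llo < conorm (Df (h j) y) \<and> conorm (Df (h j) y) \<le> onorm (Df (h j) y)
                          \<and> onorm (Df (h j) y) < lup) \<and>
          kappa_conformal \<kappa> (Df (hcomp h j) 0)"
  defines "D \<equiv> \<bar>det (matrix (Df (hcomp h n) 0))\<bar> powr (1 / real CARD('d))"
  shows "(let r = \<xi> * D in
      ball 0 (r / (4 * \<kappa>)) \<subseteq> hcomp h n ` ball 0 \<xi> \<and> hcomp h n ` ball 0 \<xi> \<subseteq> ball 0 (4 * \<kappa> * r)) \<and>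
    (\<forall>x. 0 < norm x \<and> norm x \<le> \<xi> \<longrightarrow>
      norm (hcomp h n x - Df (hcomp h n) 0 x) < (\<kappa> * G / (1 - q) + 1) * D * norm x powr (1 + \<alpha>))"
proof -
  interpret contracting_sequence R C \<kappa> lup llo \<alpha> h n
    using hyp by (rule contracting_sequenceI)
  note bounds = kappa_conformal_onorm_bounds[OF kappa_conformal_L[OF order_refl], folded D_def]
  have "ball 0 (2 * \<kappa> * (\<xi> * D)) \<subseteq> ball (0::real^'d) (4 * \<kappa> * (\<xi> * D))"
    using \<xi>(2) bounds(1) kappa_ge_1 by (intro subset_ball) simp
  then have "hcomp h n ` ball 0 \<xi> \<subseteq> ball 0 (4 * \<kappa> * (\<xi> * D))"
    using hcomp_image_ball_subset[OF \<xi>(1) bounds(1,2)] by (rule order_trans[rotated])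
  moreover have "ball 0 (\<xi> * D / (4 * \<kappa>)) \<subseteq> hcomp h n ` ball 0 \<xi>"
    by (rule ball_subset_hcomp_image[OF \<xi> bounds(1,3)])
  moreover have "norm (hcomp h n x - L n x) < (\<kappa> * G / (1 - q) + 1) * D * norm x powr (1 + \<alpha>)"
    if "0 < norm x" "norm x \<le> \<xi>" for x
    using hcomp_remainder_less[OF admissible_mono[OF \<xi>(1)] that(1) bounds(1,2)] that by simp
  ultimately show ?thesis
    by (simp add: Let_def)
qed

theorem mainTheorem6:
  fixes R C \<kappa> lup llo \<alpha> :: real
  assumes "R > 0" and "C > 0" and "\<kappa> \<ge> 1" and "1 > lup" and "lup > llo" and "llo > 0"
    and "0 < \<alpha>" and "\<alpha> < 1"
  shows "\<exists>\<xi>0 \<gamma> \<theta>. 0 < \<xi>0 \<and> \<xi>0 < R \<and> \<gamma> > 1 \<and> \<theta> > 1 \<and>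
    (\<forall>\<xi> (n::nat) (h :: nat \<Rightarrow> real^'d \<Rightarrow> real^'d).
       0 < \<xi> \<and> \<xi> \<le> \<xi>0 \<and>
       (\<forall>j\<in>{1..n}.
          C1alpha_diffeo (ball 0 R) \<alpha> (h j) \<and> h j 0 = 0 \<and>
          C1alpha_norm (ball 0 R) \<alpha> (h j) < ereal C \<and>
          (\<forall>y\<in>ball 0 R. llo < conorm (Df (h j) y) \<and> conorm (Df (h j) y) \<le> onorm (Df (h j) y)
                          \<and> onorm (Df (h j) y) < lup) \<and>
          kappa_conformal \<kappa> (Df (hcomp h j) 0))
       \<longrightarrow>
       (let r = \<xi> * \<bar>det (matrix (Df (hcomp h n) 0))\<bar> powr (1 / real CARD('d)) in
          ball 0 (r / \<theta>) \<subseteq> hcomp h n ` ball 0 \<xi> \<and> hcomp h n ` ball 0 \<xi> \<subseteq> ball 0 (\<theta> * r)) \<and>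
       (\<forall>x::real^'d. 0 < norm x \<and> norm x \<le> \<xi> \<longrightarrow>
          norm (hcomp h n x - Df (hcomp h n) 0 x)
            < \<gamma> * \<bar>det (matrix (Df (hcomp h n) 0))\<bar> powr (1 / real CARD('d)) * norm x powr (1 + \<alpha>)))"
proof -
  interpret contraction_constants R C \<kappa> lup llo \<alpha>
    using assms by unfold_locales auto
  obtain \<xi>0 where \<xi>0: "0 < \<xi>0" "admissible \<xi>0"
    using ex_admissible by blast
  show ?thesis
  proof (rule exI[of _ \<xi>0], rule exI[of _ "\<kappa> * G / (1 - q) + 1"], rule exI[of _ "4 * \<kappa>"], intro conjI)
    show "0 < \<xi>0"
      by (rule \<xi>0(1))
    show "\<xi>0 < R"
      using \<xi>0 unfolding admissible_def by simp
    show "1 < \<kappa> * G / (1 - q) + 1"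
      using kappa_ge_1 q_less_1 assms unfolding G_def by simp
    show "1 < 4 * \<kappa>"
      using kappa_ge_1 by simp
  qed (use hcomp_ball_estimates[OF admissible_mono[OF \<xi>0(2) less_imp_le]] in blast)
qed

end
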